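(* Let $S$ take values in a sample space $\mathcal{S}$ with distribution $F$ having density $f$ with respect to a reference measure $\mu$, and let $\omega\sim G$, independent of $S$, where $G$ has density $g$ with respect to Lebesgue measure on $\mathbb{R}^p$. Let $\lambda>0$ and let $\ell(\beta;s)$ be convex in $\beta\in\mathbb{R}^p$ and continuously twice differentiable in $\beta$, with gradient $\gamma(s,\beta)=\partial_\beta\ell(\beta;s)$. Let $\hat\beta=\hat\beta(S,\omega)$ be the (assumed unique) minimizer of $\ell(\beta;S)+\lambda\|\beta\|_1-\omega^T\beta$ and let $\hat z=\lambda^{-1}(\omega-\gamma(S,\hat\beta))$, so that $\hat z\in\partial\|\hat\beta\|_1$ and $\omega=\gamma(S,\hat\beta)+\lambda\hat z$. Fix $E\subseteq\{1,\dots,p\}$ and let $$\mathcal{B}=\{(\beta,z):\ \beta_{-E}=0,\ \mathrm{sign}(\beta_E)=z_E,\ \|z_{-E}\|_\infty<1\}.$$ Define the reconstruction map $\psi(s,\beta,z)=(s,\gamma(s,\beta)+\lambda z)$. Then, conditionally on the event $\{(\hat\beta,\hat z)\in\mathcal{B}\}$ (assumed to have positive probability), the law of $(S,\hat\beta,\hat z)$ is that of $(S,\hat\beta,\hat z)$ subject to $(\hat\beta,\hat z)\in\mathcal{B}$ and $(S,\gamma(S,\hat\beta)+\lambda\hat z)\sim F\times G$; concretely, parametrizing $(\beta,z)\in\mathcal{B}$ by $(\beta_E,z_{-E})$ (with $\beta=(\beta_E,0)$ and $z=(\mathrm{sign}(\beta_E),z_{-E})$), the random vector $(S,\hat\beta_E,\hat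 z_{-E})$ has density with respect to $\mu(ds)\otimes\mathrm{Leb}$ proportional to $$f(s)\cdot g\big(\gamma(s,\beta)+\lambda z\big)\cdot J\psi(s,\beta,z)\cdot 1_{\mathcal{B}}(\beta,z),$$ where $J\psi(s,\beta,z)$ is the determinant of the derivative of $\psi(s,\cdot,\cdot)$ with respect to the free coordinates $(\beta_E,z_{-E})$ on the fiber over $s$.
   Context: For $v\in\mathbb{R}^p$ and $E\subseteq\{1,\dots,p\}$, $v_E$ and $v_{-E}$ denote the subvectors indexed by $E$ and its complement; $\mathrm{sign}$ is applied coordinatewise. $\partial\|\beta\|_1$ is the subdifferential of the $\ell_1$ norm. $(S,\omega)\sim F\times G$ means $S\sim F$ and $\omega\sim G$ independently. *)

theory Defs
  imports "HOL-Probability.Probability"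
begin

definition lasso_obj ::
  "('a \<Rightarrow> real^'p \<Rightarrow> real) \<Rightarrow> real \<Rightarrow> 'a \<Rightarrow> real^'p \<Rightarrow> real^'p \<Rightarrow> real" where
  "lasso_obj ell lam s w b = ell s b + lam * (\<Sum>i\<in>UNIV. \<bar>b $ i\<bar>) - w \<bullet> b"

definition is_minimizer ::
  "('a \<Rightarrow> real^'p \<Rightarrow> real) \<Rightarrow> real \<Rightarrow> 'a \<Rightarrow> real^'p \<Rightarrow> real^'p \<Rightarrow> bool" where
  "is_minimizer ell lam s w b \<longleftrightarrow> (\<forall>c. lasso_obj ell lam s w b \<le> lasso_obj ell lam s w c)"

definition beta_hat ::
  "('a \<Rightarrow> real^'p \<Rightarrow> real) \<Rightarrow> real \<Rightarrow> 'a \<Rightarrow> real^'p \<Rightarrow> real^'p" where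
  "beta_hat ell lam s w = (THE b. is_minimizer ell lam s w b)"

definition z_hat ::
  "('a \<Rightarrow> real^'p \<Rightarrow> real) \<Rightarrow> ('a \<Rightarrow> real^'p \<Rightarrow> real^'p) \<Rightarrow> real \<Rightarrow> 'a \<Rightarrow> real^'p \<Rightarrow> real^'p" where
  "z_hat ell gam lam s w = (1 / lam) *\<^sub>R (w - gam s (beta_hat ell lam s w))"

definition Bset :: "'p set \<Rightarrow> ((real^'p) \<times> (real^'p)) set" where
  "Bset E = {(b, z). (\<forall>i. i \<notin> E \<longrightarrow> b $ i = 0) \<and> (\<forall>i\<in>E. sgn (b $ i) = z $ i)
                     \<and> (\<forall>i. i \<notin> E \<longrightarrow> \<bar>z $ i\<bar> < 1)}"

text \<open>Parametrization of B by the free coordinates (beta_E, z_{-E}), packed into a single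
  vector u in R^p: u_i = beta_i for i in E, u_i = z_i for i not in E.\<close>
definition beta_of :: "'p set \<Rightarrow> real^'p \<Rightarrow> real^'p" where
  "beta_of E u = (\<chi> i. if i \<in> E then u $ i else 0)"

definition z_of :: "'p set \<Rightarrow> real^'p \<Rightarrow> real^'p" where
  "z_of E u = (\<chi> i. if i \<in> E then sgn (u $ i) else u $ i)"

definition free_coords :: "'p set \<Rightarrow> real^'p \<Rightarrow> real^'p \<Rightarrow> real^'p" where
  "free_coords E b z = (\<chi> i. if i \<in> E then b $ i else z $ i)"

text \<open>Jacobian J psi(s,beta,z): determinant of the derivative of
  (beta_E, z_{-E}) \<mapsto> gamma(s,beta) + lam z  (with z_E = sign(beta_E) locally constant),
  where H s beta is the derivative of gamma(s, .) at beta.\<close>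
definition jac_psi ::
  "('a \<Rightarrow> real^'p \<Rightarrow> real^'p \<Rightarrow> real^'p) \<Rightarrow> real \<Rightarrow> 'p set \<Rightarrow> 'a \<Rightarrow> real^'p \<Rightarrow> real" where
  "jac_psi H lam E s b = det (matrix (\<lambda>v. H s b (\<chi> i. if i \<in> E then v $ i else 0)
                                   + lam *\<^sub>R (\<chi> i. if i \<in> E then 0 else v $ i)))"

definition cond_law :: "'b measure \<Rightarrow> 'b set \<Rightarrow> 'c measure \<Rightarrow> ('b \<Rightarrow> 'c) \<Rightarrow> 'c measure" where
  "cond_law P A N X = distr (density P (\<lambda>x. indicator A x / emeasure P A)) N X"

end

theory Submission
  imports Defs
begin

text \<open>Every \<open>(\<beta>, z) \<in> B\<close> is the solution pair at \<open>\<omega> = \<gamma>(s, \<beta>) + \<lambda> z\<close>, because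
  \<open>z\<close> is a subgradient of the \<open>\<ell>\<^sub>1\<close> norm at \<open>\<beta>\<close> and the minimizer is unique. Hence on the event
  the free coordinates \<open>u = (\<beta>\<^sub>E, z\<^sub>-\<^sub>E)\<close> of the solution determine \<open>\<omega>\<close> through the reconstruction
  map \<open>u \<mapsto> \<gamma>(s, \<beta>(u)) + \<lambda> z(u)\<close>, which is injective on the parameter set and differentiable off
  the hyperplanes \<open>\<beta>\<^sub>i = 0\<close>, \<open>i \<in> E\<close>, whose image is null. Changing variables in \<open>\<omega>\<close> on each
  fibre and integrating over \<open>s\<close> by Tonelli gives the density. The Jacobian needs no absolute
  value: the Hessian of the convex loss is positive semidefinite, and a homotopy to the identity
  shows that the determinant is then nonnegative.\<close>

section \<open>Convex functions with a differentiable gradient\<close>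

lemma has_real_derivative_along_line:
  fixes f :: "'a::real_normed_vector \<Rightarrow> real"
  assumes "(f has_derivative f') (at b)"
  shows "((\<lambda>t. f (b + t *\<^sub>R d)) has_real_derivative f' d) (at 0)"
proof -
  have "((f \<circ> (\<lambda>t. b + t *\<^sub>R d)) has_derivative (f' \<circ> (\<lambda>t. t *\<^sub>R d))) (at 0)"
    by (rule diff_chain_at) (use assms in \<open>auto intro!: derivative_eq_intros\<close>)
  moreover have "(\<lambda>t. f' (t *\<^sub>R d)) = (*) (f' d)"
    using has_derivative_linear[OF assms] by (auto simp: fun_eq_iff linear_scale)
  ultimately show ?thesis by (simp add: has_field_derivative_def o_def)
qed

lemma convex_on_gradient_inequality:
  fixes f :: "'a::real_normed_vector \<Rightarrow> real"
  assumes cvx: "convex_on UNIV f" and deriv: "(f has_derivative f') (at b)"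
  shows "f b + f' (c - b) \<le> f c"
proof -
  define \<phi> where "\<phi> t = f (b + t *\<^sub>R (c - b))" for t
  have "convex_on UNIV \<phi>"
  proof (rule convex_onI)
    fix t x y :: real assume "t > 0" "t < 1"
    have "b + ((1 - t) *\<^sub>R x + t *\<^sub>R y) *\<^sub>R (c - b)
        = (1 - t) *\<^sub>R (b + x *\<^sub>R (c - b)) + t *\<^sub>R (b + y *\<^sub>R (c - b))"
      by (simp add: algebra_simps)
    with convex_onD[OF cvx, of t] \<open>t > 0\<close> \<open>t < 1\<close>
    show "\<phi> ((1 - t) *\<^sub>R x + t *\<^sub>R y) \<le> (1 - t) * \<phi> x + t * \<phi> y"
      by (simp add: \<phi>_def)
  qed simp
  moreover have "(\<phi> has_real_derivative f' (c - b)) (at 0)"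
    unfolding \<phi>_def by (rule has_real_derivative_along_line[OF deriv])
  ultimately have "f' (c - b) * (1 - 0) \<le> \<phi> 1 - \<phi> 0"
    by (intro convex_on_imp_above_tangent) auto
  then show ?thesis by (simp add: \<phi>_def)
qed

lemma convex_on_gradient_monotone:
  fixes f :: "'a::real_inner \<Rightarrow> real"
  assumes "convex_on UNIV f" and "\<And>b. (f has_derivative (\<lambda>h. gr b \<bullet> h)) (at b)"
  shows "0 \<le> (gr x - gr y) \<bullet> (x - y)"
  using convex_on_gradient_inequality[OF assms(1) assms(2), of x y]
        convex_on_gradient_inequality[OF assms(1) assms(2), of y x]
  by (simp add: inner_diff_left inner_diff_right inner_commute)

lemma convex_on_hessian_psd:
  fixes f :: "'a::real_inner \<Rightarrow> real"
  assumes cvx: "convex_on UNIV f" and grad: "\<And>b. (f has_derivative (\<lambda>h. gr b \<bullet> h)) (at b)"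
    and hess: "(gr has_derivative H) (at b)"
  shows "0 \<le> v \<bullet> H v"
proof (rule mono_on_imp_deriv_nonneg)
  show "mono_on UNIV (\<lambda>t. v \<bullet> gr (b + t *\<^sub>R v))"
  proof (rule mono_onI)
    fix s t :: real assume "s \<le> t"
    have "0 \<le> (gr (b + t *\<^sub>R v) - gr (b + s *\<^sub>R v)) \<bullet> ((b + t *\<^sub>R v) - (b + s *\<^sub>R v))"
      by (rule convex_on_gradient_monotone[OF cvx grad])
    also have "\<dots> = (t - s) * (v \<bullet> gr (b + t *\<^sub>R v) - v \<bullet> gr (b + s *\<^sub>R v))"
      by (simp add: algebra_simps inner_diff_left inner_commute)
    finally show "v \<bullet> gr (b + s *\<^sub>R v) \<le> v \<bullet> gr (b + t *\<^sub>R v)"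
      using \<open>s \<le> t\<close> by (cases "s = t") (auto simp: zero_le_mult_iff)
  qed
  have "((\<lambda>x. v \<bullet> gr x) has_derivative (\<lambda>h. v \<bullet> H h)) (at b)"
    using hess by (auto intro!: derivative_eq_intros)
  then show "((\<lambda>t. v \<bullet> gr (b + t *\<^sub>R v)) has_real_derivative v \<bullet> H v) (at 0)"
    by (rule has_real_derivative_along_line)
qed simp

section \<open>Determinants of positive semidefinite blocks\<close>

lemma linear_beta_of: "linear (beta_of E)"
  by (rule linearI) (auto simp: beta_of_def vec_eq_iff)

lemma beta_of_add_compl: "beta_of E v + beta_of (- E) v = v"
  by (simp add: beta_of_def vec_eq_iff)

lemma inner_beta_of_compl: "beta_of E v \<bullet> beta_of (- E) w = 0"
  unfolding inner_vec_def by (rule sum.neutral) (simp add: beta_of_def)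

lemma jac_psi_beta_of:
  fixes E :: "'n::finite set"
  shows "jac_psi H lam E s b = det (matrix (\<lambda>v. H s b (beta_of E v) + lam *\<^sub>R beta_of (- E) v))"
proof -
  have "(\<chi> i. if i \<in> E then 0 else v $ i) = beta_of (- E) v" for v :: "real^'n"
    by (simp add: beta_of_def vec_eq_iff)
  then show ?thesis by (simp add: jac_psi_def beta_of_def)
qed

lemma psd_shift_injective:
  fixes M :: "real^'n::finite \<Rightarrow> real^'n"
  assumes lin: "linear M" and psd: "\<And>x. 0 \<le> x \<bullet> M x" and "t > 0" "lam > 0"
  shows "inj (\<lambda>v. M (beta_of E v) + t *\<^sub>R beta_of E v + lam *\<^sub>R beta_of (- E) v)"
proof -
  have "linear (\<lambda>v. M (beta_of E v) + t *\<^sub>R beta_of E v + lam *\<^sub>R beta_of (- E) v)"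
    by (intro linear_compose_add linear_compose_scale_right linear_compose[OF linear_beta_of lin, unfolded o_def]
        linear_beta_of)
  moreover have "v = 0" if v: "M (beta_of E v) + t *\<^sub>R beta_of E v + lam *\<^sub>R beta_of (- E) v = 0" for v
  proof -
    let ?p = "beta_of E v"
    have "0 = ?p \<bullet> (M ?p + t *\<^sub>R ?p + lam *\<^sub>R beta_of (- E) v)" by (simp add: v)
    also have "\<dots> = ?p \<bullet> M ?p + t * (?p \<bullet> ?p)"
      by (simp add: inner_add_right inner_beta_of_compl)
    finally have "t * (?p \<bullet> ?p) \<le> 0" using psd[of ?p] by linarith
    then have "?p \<bullet> ?p \<le> 0" using \<open>t > 0\<close> by (simp add: mult_le_0_iff)
    then have "?p \<bullet> ?p = 0" using inner_ge_zero[of ?p] by linarith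
    then have p0: "?p = 0" by simp
    then have "lam *\<^sub>R beta_of (- E) v = 0" using v linear_0[OF lin] by simp
    then have "beta_of (- E) v = 0" using \<open>lam > 0\<close> by simp
    with p0 show "v = 0" using beta_of_add_compl[of E v] by simp
  qed
  ultimately show ?thesis using linear_injective_0 by blast
qed

text \<open>The determinant cannot vanish along the homotopy from \<open>M\<close> to the identity on the
  \<open>E\<close>-block, and it is positive at the identity end.\<close>
lemma det_psd_plus_complement_nonneg:
  fixes M :: "real^'n::finite \<Rightarrow> real^'n"
  assumes lin: "linear M" and psd: "\<And>x. 0 \<le> x \<bullet> M x" and lam: "lam > 0"
  shows "0 \<le> det (matrix (\<lambda>v. M (beta_of E v) + lam *\<^sub>R beta_of (- E) v))"
proof -
  define L where "L t v = (1 - t) *\<^sub>R M (beta_of E v) + t *\<^sub>R beta_of E v + lam *\<^sub>R beta_of (- E) v"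
    for t v
  define d where "d t = det (matrix (L t))" for t
  have linL: "linear (L t)" for t
    unfolding L_def
    by (intro linear_compose_add linear_compose_scale_right linear_compose[OF linear_beta_of lin, unfolded o_def]
        linear_beta_of)
  have "continuous_on {0..1} d"
    unfolding d_def det_def matrix_def L_def beta_of_def
    by (simp add: vector_add_component vector_scaleR_component) (intro continuous_intros)
  moreover have "d t \<noteq> 0" if "0 < t" "t \<le> 1" for t
  proof -
    have "linear (\<lambda>x. (1 - t) *\<^sub>R M x)" using lin by (rule linear_compose_scale_right)
    moreover have "0 \<le> x \<bullet> (1 - t) *\<^sub>R M x" for x using psd[of x] that by simp
    ultimately have "inj (L t)"
      using psd_shift_injective[of "\<lambda>x. (1 - t) *\<^sub>R M x" t lam E] that lam
      by (simp add: L_def[abs_def])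
    then show ?thesis unfolding d_def using det_nz_iff_inj[OF linL] by blast
  qed
  moreover have "0 < d 1"
  proof -
    have "d 1 = (\<Prod>i\<in>UNIV. if i \<in> E then 1 else lam)"
      unfolding d_def
      by (subst det_diagonal) (auto simp: matrix_def L_def beta_of_def axis_def intro!: prod.cong)
    also have "\<dots> > 0" using lam by (intro prod_pos) auto
    finally show ?thesis .
  qed
  ultimately have "0 \<le> d 0"
    using IVT'[of d 0 0 1] by (cases "0 \<le> d 0") (auto simp: less_eq_real_def)
  then show ?thesis by (simp add: d_def L_def[abs_def])
qed

section \<open>Optimality conditions and the parametrization of \<open>B\<close>\<close>

lemma is_minimizer_if_subgradient:
  fixes ell :: "'a \<Rightarrow> real^'p::finite \<Rightarrow> real"
  assumes cvx: "convex_on UNIV (ell s)" and grad: "(ell s has_derivative (\<lambda>h. g \<bullet> h)) (at b)"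
    and lam: "lam \<ge> 0" and z_le: "\<And>i. \<bar>z $ i\<bar> \<le> 1" and z_b: "z \<bullet> b = (\<Sum>i\<in>UNIV. \<bar>b $ i\<bar>)"
  shows "is_minimizer ell lam s (g + lam *\<^sub>R z) b"
  unfolding is_minimizer_def
proof
  fix c
  have z_c: "z \<bullet> c \<le> (\<Sum>i\<in>UNIV. \<bar>c $ i\<bar>)"
    unfolding inner_vec_def inner_real_def
  proof (rule sum_mono)
    fix i
    have "z $ i * c $ i \<le> \<bar>z $ i\<bar> * \<bar>c $ i\<bar>" by (metis abs_ge_self abs_mult)
    also have "\<dots> \<le> \<bar>c $ i\<bar>" using z_le[of i] by (simp add: mult_left_le_one_le)
    finally show "z $ i * c $ i \<le> \<bar>c $ i\<bar>" .
  qed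
  have "lasso_obj ell lam s (g + lam *\<^sub>R z) b = ell s b - g \<bullet> b"
    using z_b by (simp add: lasso_obj_def inner_add_left)
  also have "\<dots> \<le> ell s c - g \<bullet> c"
    using convex_on_gradient_inequality[OF cvx grad, of c] by (simp add: inner_diff_right)
  also have "\<dots> \<le> lasso_obj ell lam s (g + lam *\<^sub>R z) c"
    using z_c lam by (simp add: lasso_obj_def inner_add_left mult_left_mono)
  finally show "lasso_obj ell lam s (g + lam *\<^sub>R z) b \<le> lasso_obj ell lam s (g + lam *\<^sub>R z) c" .
qed

definition Bset_coords :: "'p::finite set \<Rightarrow> (real^'p) set" where
  "Bset_coords E = {u. \<forall>i. i \<notin> E \<longrightarrow> \<bar>u $ i\<bar> < 1}"

lemma Bset_iff_Bset_coords: "(beta_of E u, z_of E u) \<in> Bset E \<longleftrightarrow> u \<in> Bset_coords E"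
  by (auto simp: Bset_def beta_of_def z_of_def Bset_coords_def)

lemma free_coords_beta_of_z_of: "free_coords E (beta_of E u) (z_of E u) = u"
  by (simp add: free_coords_def beta_of_def z_of_def vec_eq_iff)

lemma Bset_free_coords:
  assumes "(b, z) \<in> Bset E"
  shows "free_coords E b z \<in> Bset_coords E" "beta_of E (free_coords E b z) = b"
    "z_of E (free_coords E b z) = z"
  using assms by (auto simp: Bset_def free_coords_def beta_of_def z_of_def Bset_coords_def vec_eq_iff)

lemma z_of_subgradient:
  assumes "u \<in> Bset_coords E"
  shows "\<bar>z_of E u $ i\<bar> \<le> 1" "z_of E u \<bullet> beta_of E u = (\<Sum>i\<in>UNIV. \<bar>beta_of E u $ i\<bar>)"
  using assms unfolding inner_vec_def
  by (auto simp: z_of_def beta_of_def Bset_coords_def sgn_if abs_sgn intro!: sum.cong)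

lemma open_Bset_coords: "open (Bset_coords E)"
proof -
  have "Bset_coords E = (\<Inter>i\<in>- E. {u. \<bar>u $ i\<bar> < 1})" by (auto simp: Bset_coords_def)
  then show ?thesis by (auto intro!: open_INT open_Collect_less continuous_intros)
qed

section \<open>The reconstruction map\<close>

text \<open>The second component of \<open>\<psi>(s, \<beta>, z) = (s, \<gamma>(s, \<beta>) + \<lambda> z)\<close>, written in the free
  coordinates \<open>u = (\<beta>\<^sub>E, z\<^sub>-\<^sub>E)\<close> of \<open>B\<close>.\<close>
definition omega_of ::
  "('a \<Rightarrow> real^'p \<Rightarrow> real^'p) \<Rightarrow> real \<Rightarrow> 'p::finite set \<Rightarrow> 'a \<Rightarrow> real^'p \<Rightarrow> real^'p" where
  "omega_of gam lam E s u = gam s (beta_of E u) + lam *\<^sub>R z_of E u"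

lemma z_of_sign_split: "z_of E v = beta_of E (\<chi> i. sgn (v $ i)) + beta_of (- E) v"
  by (simp add: z_of_def beta_of_def vec_eq_iff)

lemma finite_range_sgn_vec: "finite (range (\<lambda>v :: real^'p::finite. \<chi> i. sgn (v $ i)))"
proof (rule finite_subset)
  show "range (\<lambda>v :: real^'p. \<chi> i. sgn (v $ i)) \<subseteq> vec_lambda ` (UNIV \<rightarrow>\<^sub>E {-1, 0, 1})"
  proof (rule image_subsetI)
    fix v :: "real^'p"
    have "(\<lambda>i. sgn (v $ i)) \<in> UNIV \<rightarrow>\<^sub>E {-1, 0, 1}" by (auto simp: sgn_if split: if_splits)
    then show "(\<chi> i. sgn (v $ i)) \<in> vec_lambda ` (UNIV \<rightarrow>\<^sub>E {-1, 0, 1})" by (rule imageI)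
  qed
qed (intro finite_imageI finite_PiE; simp)

lemma has_derivative_fixed_signs:
  assumes deriv: "\<And>b. (G has_derivative H b) (at b)"
  shows "((\<lambda>v. G (beta_of E v) + lam *\<^sub>R (c + beta_of (- E) v)) has_derivative
           (\<lambda>v. H (beta_of E u) (beta_of E v) + lam *\<^sub>R beta_of (- E) v)) (at u)"
proof -
  have "(beta_of F has_derivative beta_of F) (at u)" for F
    using linear_beta_of[of F] linear_conv_bounded_linear bounded_linear_imp_has_derivative by blast
  from diff_chain_at[OF this deriv] this show ?thesis
    by (auto intro!: derivative_eq_intros simp: o_def)
qed

text \<open>Off the coordinate hyperplanes \<open>u$i = 0\<close>, \<open>i \<in> E\<close>, the signs \<open>z_E = sgn(u_E)\<close> are
  locally constant, so \<open>omega_of\<close> is locally a map with fixed signs.\<close>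
lemma omega_of_has_derivative:
  fixes gam :: "'a \<Rightarrow> real^'p::finite \<Rightarrow> real^'p"
  assumes deriv: "\<And>b. (gam s has_derivative H s b) (at b)" and u: "\<forall>i\<in>E. u $ i \<noteq> 0"
  shows "(omega_of gam lam E s has_derivative
           (\<lambda>v. H s (beta_of E u) (beta_of E v) + lam *\<^sub>R beta_of (- E) v)) (at u)"
proof -
  define U where "U = (\<Inter>i\<in>E. {v :: real^'p. 0 < v $ i * u $ i})"
  have "open U" unfolding U_def by (auto intro!: open_INT open_Collect_less continuous_intros)
  moreover have "u \<in> U" using u by (auto simp: U_def zero_less_mult_iff linorder_neq_iff)
  moreover have "gam s (beta_of E v) + lam *\<^sub>R (beta_of E (\<chi> i. sgn (u $ i)) + beta_of (- E) v)
      = omega_of gam lam E s v" if "v \<in> U" for v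
  proof -
    have "beta_of E (\<chi> i. sgn (v $ i)) = beta_of E (\<chi> i. sgn (u $ i))"
      using that by (auto simp: U_def beta_of_def vec_eq_iff sgn_if zero_less_mult_iff)
    then show ?thesis by (simp add: omega_of_def z_of_sign_split)
  qed
  ultimately show ?thesis
    by (rule has_derivative_transform_within_open[OF has_derivative_fixed_signs[OF deriv]])
qed

lemma negligible_coordinate_hyperplanes: "negligible {u :: real^'p::finite. \<exists>i\<in>E. u $ i = 0}"
proof -
  have "{u :: real^'p. \<exists>i\<in>E. u $ i = 0} = (\<Union>i\<in>E. {u. u $ i = 0})" by auto
  then show ?thesis by (auto intro!: negligible_Union negligible_standard_hyperplane_cart)
qed

lemma negligible_omega_of_image_hyperplanes:
  fixes gam :: "'a \<Rightarrow> real^'p::finite \<Rightarrow> real^'p"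
  assumes deriv: "\<And>b. (gam s has_derivative H s b) (at b)"
  shows "negligible (omega_of gam lam E s ` {u. \<exists>i\<in>E. u $ i = 0})"
proof -
  define N :: "(real^'p) set" where "N = {u. \<exists>i\<in>E. u $ i = 0}"
  define F where "F c v = gam s (beta_of E v) + lam *\<^sub>R (beta_of E c + beta_of (- E) v)" for c v
  have "omega_of gam lam E s ` N \<subseteq> (\<Union>c\<in>range (\<lambda>v. \<chi> i. sgn (v $ i)). F c ` N)"
    by (auto simp: omega_of_def F_def z_of_sign_split)
  moreover have "negligible (F c ` N)" for c
  proof (rule negligible_differentiable_image_negligible[OF order_refl])
    show "negligible N" unfolding N_def by (rule negligible_coordinate_hyperplanes)
    show "F c differentiable_on N"
      using has_derivative_fixed_signs[OF deriv] unfolding F_def differentiable_on_def differentiable_def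
      by (blast intro: has_derivative_at_withinI)
  qed
  then have "negligible (\<Union>c\<in>range (\<lambda>v. \<chi> i. sgn (v $ i)). F c ` N)"
    by (intro negligible_Union finite_imageI finite_range_sgn_vec) auto
  ultimately show ?thesis unfolding N_def by (rule negligible_subset[rotated])
qed

section \<open>Change of variables over an arbitrary finite index type\<close>

lemma det_reindex_bij:
  fixes A :: "real^'n::finite^'n" and r :: "'m::finite \<Rightarrow> 'n"
  assumes r: "bij r"
  shows "det ((\<chi> i j. A $ r i $ r j) :: real^'m^'m) = det A"
proof -
  have conj_sign: "sign (r \<circ> q \<circ> inv r) = sign q" if "q permutes (UNIV::'m set)" for q
  proof -
    have "map_permutation UNIV r q = r \<circ> q \<circ> inv r"
      unfolding map_permutation_def using r by (auto simp: bij_def restrict_id_def fun_eq_iff)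
    moreover have "sign (map_permutation UNIV r q) = sign q"
      by (rule sign_map_permutation) (use r that in \<open>auto simp: bij_def\<close>)
    ultimately show ?thesis by simp
  qed
  have conj_permutes: "r \<circ> q \<circ> inv r permutes UNIV" if "q permutes (UNIV::'m set)" for q
    using that r by (intro bij_imp_permutes) (auto intro!: bij_comp bij_imp_bij_inv simp: permutes_bij)
  have conj_permutes': "inv r \<circ> p \<circ> r permutes UNIV" if "p permutes (UNIV::'n set)" for p
    using that r by (intro bij_imp_permutes) (auto intro!: bij_comp bij_imp_bij_inv simp: permutes_bij)
  have conj_prod: "(\<Prod>k\<in>UNIV. A $ k $ (r \<circ> q \<circ> inv r) k) = (\<Prod>i\<in>UNIV. A $ r i $ r (q i))"
    for q :: "'m \<Rightarrow> 'm"
    using prod.reindex_bij_betw[of r UNIV UNIV "\<lambda>k. A $ k $ (r \<circ> q \<circ> inv r) k"] r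
    by (simp add: bij_is_inj)
  show ?thesis
    unfolding det_def
    by (rule sum.reindex_bij_witness[of _ "\<lambda>p. inv r \<circ> p \<circ> r" "\<lambda>q. r \<circ> q \<circ> inv r"])
       (use r conj_permutes conj_permutes' conj_sign conj_prod in
         \<open>auto simp: fun_eq_iff bij_is_inj bij_is_surj surj_f_inv_f\<close>)
qed

text \<open>The change of variables theorem of HOL-Analysis needs a well-ordered index type;
  an arbitrary finite index type is replaced by a copy ordered through \<open>to_nat\<close>.\<close>
typedef 'a ordered_copy = "UNIV :: 'a set"
  morphisms orig copy by simp

instance ordered_copy :: (finite) finite
proof
  have "(UNIV :: 'a ordered_copy set) = copy ` UNIV"
    by (metis orig_inverse surj_def)
  then show "finite (UNIV :: 'a ordered_copy set)" by (metis finite finite_imageI)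
qed

instantiation ordered_copy :: (finite) linorder
begin
definition less_eq_ordered_copy :: "'a ordered_copy \<Rightarrow> 'a ordered_copy \<Rightarrow> bool" where
  "less_eq_ordered_copy x y \<longleftrightarrow> to_nat (orig x) \<le> to_nat (orig y)"
definition less_ordered_copy :: "'a ordered_copy \<Rightarrow> 'a ordered_copy \<Rightarrow> bool" where
  "less_ordered_copy x y \<longleftrightarrow> to_nat (orig x) < to_nat (orig y)"
instance
  by standard (auto simp: less_eq_ordered_copy_def less_ordered_copy_def orig_inject)
end

instance ordered_copy :: (finite) wellorder
proof
  fix P :: "'a ordered_copy \<Rightarrow> bool" and a :: "'a ordered_copy"
  assume step: "\<And>x. (\<And>y. y < x \<Longrightarrow> P y) \<Longrightarrow> P x"
  have "P x" if "to_nat (orig x) = n" for n x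
    using that
  proof (induction n arbitrary: x rule: less_induct)
    case (less n)
    show ?case by (rule step) (use less in \<open>auto simp: less_ordered_copy_def\<close>)
  qed
  then show "P a" by blast
qed

lemma bij_orig: "bij orig"
  by (metis copy_inverse orig_inject UNIV_I bij_iff)

definition to_copy :: "real^'a::finite \<Rightarrow> real^'a ordered_copy" where
  "to_copy x = (\<chi> j. x $ orig j)"

definition from_copy :: "real^'a ordered_copy \<Rightarrow> real^'a::finite" where
  "from_copy y = (\<chi> i. y $ copy i)"

lemma from_to_copy [simp]: "from_copy (to_copy x) = x"
  by (simp add: from_copy_def to_copy_def copy_inverse vec_eq_iff)

lemma to_from_copy [simp]: "to_copy (from_copy y) = y"
  by (simp add: from_copy_def to_copy_def orig_inverse vec_eq_iff)

lemma bounded_linear_to_copy: "bounded_linear to_copy"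
  by (simp add: linear_conv_bounded_linear[symmetric]) (rule linearI; simp add: to_copy_def vec_eq_iff)

lemma bounded_linear_from_copy: "bounded_linear from_copy"
  by (simp add: linear_conv_bounded_linear[symmetric]) (rule linearI; simp add: from_copy_def vec_eq_iff)

lemma borel_measurable_to_copy [measurable]: "to_copy \<in> borel_measurable borel"
  using bounded_linear_to_copy by (intro borel_measurable_continuous_onI linear_continuous_on)

lemma borel_measurable_from_copy [measurable]: "from_copy \<in> borel_measurable borel"
  using bounded_linear_from_copy by (intro borel_measurable_continuous_onI linear_continuous_on)

lemma from_copy_axis: "from_copy (axis j 1 :: real^'a::finite ordered_copy) = axis (orig j) 1"
  by (auto simp: from_copy_def axis_def vec_eq_iff) (metis copy_inverse UNIV_I orig_inverse)+

lemma prod_Basis_vec: "(\<Prod>b\<in>(Basis :: (real^'n::finite) set). F b) = (\<Prod>i\<in>UNIV. F (axis i 1))"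
proof -
  have "(Basis :: (real^'n) set) = (\<lambda>i. axis i 1) ` UNIV" by (auto simp: Basis_vec_def)
  moreover have "inj (\<lambda>i::'n. axis i (1::real))" by (auto simp: inj_def axis_eq_axis)
  ultimately show ?thesis using prod.reindex[of "\<lambda>i::'n. axis i (1::real)" UNIV F] by simp
qed

lemma distr_lborel_to_copy: "distr lborel borel (to_copy :: real^'a::finite \<Rightarrow> _) = lborel"
proof (rule lborel_eqI[symmetric])
  fix l u :: "real^'a ordered_copy"
  assume le: "\<And>b. b \<in> Basis \<Longrightarrow> l \<bullet> b \<le> u \<bullet> b"
  have pre: "to_copy -` box l u = box (from_copy l) (from_copy u)"
    by (auto simp: mem_box_cart to_copy_def from_copy_def) (metis copy_inverse UNIV_I orig_inverse)+
  have le': "from_copy l \<bullet> b \<le> from_copy u \<bullet> b" if "b \<in> Basis" for b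
  proof -
    obtain i where b: "b = axis i 1" using \<open>b \<in> Basis\<close> by (auto simp: Basis_vec_def)
    have "axis (copy i) 1 \<in> (Basis :: (real^'a ordered_copy) set)" by (auto simp: Basis_vec_def)
    from le[OF this] show ?thesis by (simp add: b inner_axis from_copy_def)
  qed
  have "(\<Prod>b\<in>(Basis :: (real^'a) set). (from_copy u - from_copy l) \<bullet> b)
      = (\<Prod>i\<in>UNIV. u $ copy i - l $ copy i)"
    by (simp add: prod_Basis_vec inner_axis from_copy_def)
  also have "\<dots> = (\<Prod>j\<in>UNIV. u $ j - l $ j)"
    using prod.reindex_bij_betw[of copy UNIV UNIV "\<lambda>j. u $ j - l $ j"]
    by (simp add: bij_betw_def inj_def copy_inject) (metis orig_inverse surj_def)
  also have "\<dots> = (\<Prod>b\<in>Basis. (u - l) \<bullet> b)"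
    by (simp add: prod_Basis_vec inner_axis)
  finally show "emeasure (distr lborel borel to_copy) (box l u) = (\<Prod>b\<in>Basis. (u - l) \<bullet> b)"
    using emeasure_lborel_box[OF le'] by (simp add: emeasure_distr pre)
qed simp

lemma nn_integral_to_copy:
  assumes "F \<in> borel_measurable borel"
  shows "(\<integral>\<^sup>+y. F y \<partial>lborel) = (\<integral>\<^sup>+x. F (to_copy x :: real^'a::finite ordered_copy) \<partial>lborel)"
  using assms by (subst distr_lborel_to_copy[symmetric]) (simp add: nn_integral_distr)

lemma det_matrix_conj_copy:
  fixes D :: "real^'a::finite \<Rightarrow> real^'a"
  shows "det (matrix (to_copy \<circ> D \<circ> from_copy)) = det (matrix D)"
proof -
  have "matrix (to_copy \<circ> D \<circ> from_copy) = (\<chi> i j. matrix D $ orig i $ orig j)"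
    by (simp add: matrix_def from_copy_axis vec_eq_iff to_copy_def)
  then show ?thesis using det_reindex_bij[OF bij_orig] by simp
qed

lemma card_ordered_copy: "CARD('a::finite ordered_copy) = CARD('a)"
  using bij_orig bij_betw_same_card by blast

lemma negligible_image_to_copy:
  "negligible S \<Longrightarrow> negligible (to_copy ` (S :: (real^'a::finite) set))"
  by (rule negligible_differentiable_image_negligible)
     (auto simp: card_ordered_copy intro!: bounded_linear_imp_differentiable_on bounded_linear_to_copy)

lemma inner_vec1_Basis: "b \<in> (Basis :: (real^1) set) \<Longrightarrow> (vec x :: real^1) \<bullet> b = x"
  by (auto simp: Basis_vec_def inner_axis)

lemma has_integral_vec1_iff:
  "((\<lambda>x. vec (f x) :: real^1) has_integral vec y) S \<longleftrightarrow> (f has_integral y) S"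
  by (subst has_integral_componentwise_iff) (auto simp: inner_vec1_Basis)

lemma absolutely_integrable_vec1_iff:
  "((\<lambda>x. vec (f x) :: real^1) absolutely_integrable_on S) \<longleftrightarrow> (f absolutely_integrable_on S)"
  by (subst absolutely_integrable_componentwise_iff) (auto simp: inner_vec1_Basis)

lemma nn_integral_change_of_variables_wellorder:
  fixes \<Phi> :: "real^'m::{finite,wellorder} \<Rightarrow> real^'m::_" and h :: "real^'m::_ \<Rightarrow> real"
  assumes S: "S \<in> sets lebesgue"
    and deriv: "\<And>x. x \<in> S \<Longrightarrow> (\<Phi> has_derivative D x) (at x within S)"
    and inj: "inj_on \<Phi> S"
    and h_meas: "h \<in> borel_measurable borel" and h_nonneg: "\<And>w. h w \<ge> 0"
    and outside: "negligible {w. h w \<noteq> 0 \<and> w \<notin> \<Phi> ` S}"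
    and finite: "(\<integral>\<^sup>+w. ennreal (h w) \<partial>lborel) < \<infinity>"
  shows "(\<integral>\<^sup>+w. ennreal (h w) \<partial>lborel)
       = (\<integral>\<^sup>+u. ennreal (\<bar>det (matrix (D u))\<bar> * h (\<Phi> u)) * indicator S u \<partial>lborel)"
proof -
  obtain r where r: "(\<integral>\<^sup>+w. ennreal (h w) \<partial>lborel) = ennreal r" "r \<ge> 0"
    using finite by (cases "(\<integral>\<^sup>+w. ennreal (h w) \<partial>lborel)") auto
  have "(h has_integral r) UNIV"
    by (rule nn_integral_has_integral) (use h_meas h_nonneg r in auto)
  then have "((\<lambda>x. if x \<in> \<Phi> ` S then h x else 0) has_integral r) UNIV"
    by (rule has_integral_spike[OF outside, rotated]) auto
  then have h_int: "(h has_integral r) (\<Phi> ` S)"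
    by (simp add: has_integral_restrict_UNIV)
  then have "(\<lambda>x. vec (h x) :: real^1) absolutely_integrable_on (\<Phi> ` S)"
    using absolutely_integrable_on_iff_nonneg h_nonneg
    by (metis absolutely_integrable_vec1_iff has_integral_iff)
  moreover have "integral (\<Phi> ` S) (\<lambda>x. vec (h x) :: real^1) = vec r"
    using h_int by (simp add: has_integral_vec1_iff[symmetric] integral_unique)
  ultimately have "(\<lambda>x. \<bar>det (matrix (D x))\<bar> *\<^sub>R (vec (h (\<Phi> x)) :: real^1)) absolutely_integrable_on S \<and>
      integral S (\<lambda>x. \<bar>det (matrix (D x))\<bar> *\<^sub>R (vec (h (\<Phi> x)) :: real^1)) = vec r"
    using has_absolute_integral_change_of_variables[OF S, of \<Phi> D "\<lambda>x. vec (h x)" "vec r"] deriv inj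
    by blast
  moreover have "(\<lambda>x. \<bar>det (matrix (D x))\<bar> *\<^sub>R (vec (h (\<Phi> x)) :: real^1))
      = (\<lambda>x. vec (\<bar>det (matrix (D x))\<bar> * h (\<Phi> x)))"
    by (simp add: vec_eq_iff fun_eq_iff)
  ultimately have "((\<lambda>x. vec (\<bar>det (matrix (D x))\<bar> * h (\<Phi> x)) :: real^1) has_integral vec r) S"
    unfolding absolutely_integrable_on_def by (metis integrable_integral)
  then have "((\<lambda>x. \<bar>det (matrix (D x))\<bar> * h (\<Phi> x)) has_integral r) S"
    by (simp add: has_integral_vec1_iff)
  from nn_integral_has_integral_lebesgue'[OF _ this] h_nonneg r show ?thesis by simp
qed

lemma nn_integral_change_of_variables:
  fixes \<Phi> :: "real^'n::finite \<Rightarrow> real^'n" and h :: "real^'n \<Rightarrow> real"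
  assumes S: "open S"
    and deriv: "\<And>x. x \<in> S \<Longrightarrow> (\<Phi> has_derivative D x) (at x)"
    and inj: "inj_on \<Phi> S"
    and h_meas: "h \<in> borel_measurable borel" and h_nonneg: "\<And>w. h w \<ge> 0"
    and outside: "negligible {w. h w \<noteq> 0 \<and> w \<notin> \<Phi> ` S}"
    and finite: "(\<integral>\<^sup>+w. ennreal (h w) \<partial>lborel) < \<infinity>"
    and meas: "(\<lambda>u. ennreal (\<bar>det (matrix (D u))\<bar> * h (\<Phi> u)) * indicator S u) \<in> borel_measurable borel"
  shows "(\<integral>\<^sup>+w. ennreal (h w) \<partial>lborel)
       = (\<integral>\<^sup>+u. ennreal (\<bar>det (matrix (D u))\<bar> * h (\<Phi> u)) * indicator S u \<partial>lborel)"
proof -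
  define \<Phi>' where "\<Phi>' = to_copy \<circ> \<Phi> \<circ> from_copy"
  define S' where "S' = from_copy -` S"
  define D' where "D' y = to_copy \<circ> D (from_copy y) \<circ> from_copy" for y
  have "open S'"
    unfolding S'_def using S bounded_linear_from_copy by (intro open_vimage linear_continuous_on)
  have deriv': "(\<Phi>' has_derivative D' y) (at y within S')" if "y \<in> S'" for y
  proof -
    have "(\<Phi> has_derivative D (from_copy y)) (at (from_copy y))" using deriv that by (simp add: S'_def)
    then have "(\<Phi>' has_derivative D' y) (at y)"
      unfolding \<Phi>'_def D'_def
      by (intro diff_chain_at bounded_linear_imp_has_derivative bounded_linear_from_copy
          bounded_linear_to_copy)
    then show ?thesis by (rule has_derivative_at_withinI)
  qed
  have "inj_on \<Phi>' S'"
  proof (rule inj_onI)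
    fix x y assume "x \<in> S'" "y \<in> S'" "\<Phi>' x = \<Phi>' y"
    then have "from_copy (\<Phi>' x) = from_copy (\<Phi>' y)" by simp
    then have "\<Phi> (from_copy x) = \<Phi> (from_copy y)" by (simp add: \<Phi>'_def)
    moreover have "from_copy x \<in> S" "from_copy y \<in> S"
      using \<open>x \<in> S'\<close> \<open>y \<in> S'\<close> by (simp_all add: S'_def)
    ultimately have "from_copy x = from_copy y" using inj by (auto simp: inj_on_def)
    then show "x = y" by (metis to_from_copy)
  qed
  have "{y. h (from_copy y) \<noteq> 0 \<and> y \<notin> \<Phi>' ` S'} \<subseteq> to_copy ` {w. h w \<noteq> 0 \<and> w \<notin> \<Phi> ` S}"
  proof
    fix y assume y: "y \<in> {y. h (from_copy y) \<noteq> 0 \<and> y \<notin> \<Phi>' ` S'}"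
    have "from_copy y \<notin> \<Phi> ` S"
    proof
      assume "from_copy y \<in> \<Phi> ` S"
      then obtain x where "x \<in> S" "from_copy y = \<Phi> x" by auto
      then have "to_copy x \<in> S'" "y = \<Phi>' (to_copy x)"
        by (simp_all add: \<Phi>'_def S'_def flip: \<open>from_copy y = \<Phi> x\<close>)
      with y show False by auto
    qed
    with y have "from_copy y \<in> {w. h w \<noteq> 0 \<and> w \<notin> \<Phi> ` S}" by simp
    then have "to_copy (from_copy y) \<in> to_copy ` {w. h w \<noteq> 0 \<and> w \<notin> \<Phi> ` S}" by (rule imageI)
    then show "y \<in> to_copy ` {w. h w \<noteq> 0 \<and> w \<notin> \<Phi> ` S}" by simp
  qed
  then have outside': "negligible {y. h (from_copy y) \<noteq> 0 \<and> y \<notin> \<Phi>' ` S'}"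
    using negligible_image_to_copy[OF outside] negligible_subset by blast
  have h_copy: "(\<integral>\<^sup>+w. ennreal (h w) \<partial>lborel) = (\<integral>\<^sup>+y. ennreal (h (from_copy y)) \<partial>lborel)"
    using h_meas by (subst nn_integral_to_copy) auto
  also have "\<dots> = (\<integral>\<^sup>+y. ennreal (\<bar>det (matrix (D' y))\<bar> * h (from_copy (\<Phi>' y))) * indicator S' y \<partial>lborel)"
    by (rule nn_integral_change_of_variables_wellorder[of S' \<Phi>' D' "\<lambda>y. h (from_copy y)"])
       (use \<open>open S'\<close> deriv' \<open>inj_on \<Phi>' S'\<close> h_meas h_nonneg outside' finite h_copy in auto)
  also have "\<dots> = (\<integral>\<^sup>+y. ennreal (\<bar>det (matrix (D (from_copy y)))\<bar> * h (\<Phi> (from_copy y)))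
                          * indicator S (from_copy y) \<partial>lborel)"
    by (simp add: D'_def \<Phi>'_def S'_def det_matrix_conj_copy indicator_def)
  also have "\<dots> = (\<integral>\<^sup>+u. ennreal (\<bar>det (matrix (D u))\<bar> * h (\<Phi> u)) * indicator S u \<partial>lborel)"
    using measurable_compose[OF borel_measurable_from_copy meas]
    by (subst nn_integral_to_copy) (simp_all add: o_def)
  finally show ?thesis .
qed

section \<open>Measurability\<close>

lemma borel_measurable_vec_lambda:
  fixes F :: "'b \<Rightarrow> 'n::finite \<Rightarrow> real"
  assumes "\<And>i. (\<lambda>x. F x i) \<in> borel_measurable M"
  shows "(\<lambda>x. (\<chi> i. F x i) :: real^'n) \<in> borel_measurable M"
proof (rule iffD2[OF borel_measurable_euclidean_space], intro ballI)
  fix b :: "real^'n" assume "b \<in> Basis"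
  then obtain i where "b = axis i 1" by (auto simp: Basis_vec_def)
  then show "(\<lambda>x. (\<chi> i. F x i) \<bullet> b) \<in> borel_measurable M"
    using assms[of i] by (simp add: inner_axis)
qed

lemma borel_measurable_vec_nth [measurable (raw)]:
  fixes F :: "'b \<Rightarrow> real^'n::finite"
  shows "F \<in> borel_measurable M \<Longrightarrow> (\<lambda>x. F x $ i) \<in> borel_measurable M"
  by (rule measurable_compose[OF _ borel_measurable_nth])

lemma borel_measurable_beta_of [measurable]: "beta_of E \<in> borel_measurable borel"
  unfolding beta_of_def by (intro borel_measurable_vec_lambda) measurable

lemma borel_measurable_z_of [measurable]: "z_of E \<in> borel_measurable borel"
  unfolding z_of_def by (intro borel_measurable_vec_lambda) measurable

lemma borel_measurable_free_coords [measurable]: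
  assumes "F \<in> borel_measurable M" "G \<in> borel_measurable M"
  shows "(\<lambda>x. free_coords E (F x) (G x)) \<in> borel_measurable M"
  unfolding free_coords_def
proof (intro borel_measurable_vec_lambda)
  fix i show "(\<lambda>x. if i \<in> E then F x $ i else G x $ i) \<in> borel_measurable M"
    using assms by (cases "i \<in> E") (simp_all add: borel_measurable_vec_nth)
qed

lemma pred_Bset [measurable]:
  fixes F G :: "'b \<Rightarrow> real^'p::finite"
  assumes [measurable]: "F \<in> borel_measurable M" "G \<in> borel_measurable M"
  shows "Measurable.pred M (\<lambda>x. (F x, G x) \<in> Bset E)"
  unfolding Bset_def mem_Collect_eq case_prod_conv by measurable

lemma sets_Bset_coords [measurable]: "Bset_coords E \<in> sets borel"
  by (simp add: open_Bset_coords)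

lemma borel_measurable_comp_pair:
  assumes "(\<lambda>(s, b). G s b) \<in> borel_measurable (N \<Otimes>\<^sub>M lborel)"
    and "K \<in> borel_measurable (N \<Otimes>\<^sub>M lborel)"
  shows "(\<lambda>x. G (fst x) (K x)) \<in> borel_measurable (N \<Otimes>\<^sub>M lborel)"
proof -
  have "(\<lambda>x. (fst x, K x)) \<in> measurable (N \<Otimes>\<^sub>M lborel) (N \<Otimes>\<^sub>M lborel)"
    using assms(2) by (intro measurable_Pair) (auto simp: measurable_lborel1)
  from measurable_comp[OF this assms(1)] show ?thesis by (simp add: o_def)
qed

lemma borel_measurable_beta_hat_z_hat:
  fixes gam :: "'a \<Rightarrow> real^'p::finite \<Rightarrow> real^'p"
  assumes gam_meas: "(\<lambda>(s, b). gam s b) \<in> borel_measurable (N \<Otimes>\<^sub>M lborel)"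
    and bhat_meas: "(\<lambda>(s, w). beta_hat ell lam s w) \<in> borel_measurable (N \<Otimes>\<^sub>M lborel)"
  shows "(\<lambda>x. beta_hat ell lam (fst x) (snd x)) \<in> borel_measurable (N \<Otimes>\<^sub>M lborel)"
    and "(\<lambda>x. z_hat ell gam lam (fst x) (snd x)) \<in> borel_measurable (N \<Otimes>\<^sub>M lborel)"
proof -
  show bhat: "(\<lambda>x. beta_hat ell lam (fst x) (snd x)) \<in> borel_measurable (N \<Otimes>\<^sub>M lborel)"
    using bhat_meas by (simp add: split_beta')
  show "(\<lambda>x. z_hat ell gam lam (fst x) (snd x)) \<in> borel_measurable (N \<Otimes>\<^sub>M lborel)"
    using borel_measurable_comp_pair[OF gam_meas bhat] unfolding z_hat_def by measurable
qed

text \<open>Components of a derivative are pointwise limits of difference quotients.\<close>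
lemma borel_measurable_derivative_component:
  fixes gam :: "'a \<Rightarrow> real^'p::finite \<Rightarrow> real^'p"
  assumes gam_meas: "(\<lambda>(s, b). gam s b) \<in> borel_measurable (N \<Otimes>\<^sub>M lborel)"
    and deriv: "\<And>s b. (gam s has_derivative H s b) (at b)"
    and K: "K \<in> borel_measurable (N \<Otimes>\<^sub>M lborel)"
  shows "(\<lambda>x. H (fst x) (K x) v $ i) \<in> borel_measurable (N \<Otimes>\<^sub>M lborel)"
proof (rule borel_measurable_LIMSEQ_real)
  define t where "t n = inverse (real (Suc n))" for n
  show "(\<lambda>x. (gam (fst x) (K x + t n *\<^sub>R v) $ i - gam (fst x) (K x) $ i) / t n)
      \<in> borel_measurable (N \<Otimes>\<^sub>M lborel)" for n
  proof -
    have "(\<lambda>x. K x + t n *\<^sub>R v) \<in> borel_measurable (N \<Otimes>\<^sub>M lborel)" using K by measurable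
    with borel_measurable_comp_pair[OF gam_meas] borel_measurable_comp_pair[OF gam_meas K]
    show ?thesis by measurable
  qed
  fix x
  have "((\<lambda>y. gam (fst x) y $ i) has_derivative (\<lambda>h. H (fst x) (K x) h $ i)) (at (K x))"
    by (rule bounded_linear.has_derivative[OF bounded_linear_vec_nth deriv])
  from has_real_derivative_along_line[OF this, of v]
  have "(\<lambda>h. (gam (fst x) (K x + h *\<^sub>R v) $ i - gam (fst x) (K x) $ i) / h) \<midarrow>0\<rightarrow> H (fst x) (K x) v $ i"
    by (simp add: DERIV_def)
  moreover have "\<forall>n. t n \<noteq> 0" "t \<longlonglongrightarrow> 0"
    using LIMSEQ_inverse_real_of_nat unfolding t_def[abs_def] by auto
  ultimately show "(\<lambda>n. (gam (fst x) (K x + t n *\<^sub>R v) $ i - gam (fst x) (K x) $ i) / t n)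
      \<longlonglongrightarrow> H (fst x) (K x) v $ i"
    unfolding LIMSEQ_SEQ_conv[symmetric] by auto
qed

lemma borel_measurable_jac_psi:
  fixes gam :: "'a \<Rightarrow> real^'p::finite \<Rightarrow> real^'p"
  assumes gam_meas: "(\<lambda>(s, b). gam s b) \<in> borel_measurable (N \<Otimes>\<^sub>M lborel)"
    and deriv: "\<And>s b. (gam s has_derivative H s b) (at b)"
  shows "(\<lambda>x. jac_psi H lam E (fst x) (beta_of E (snd x))) \<in> borel_measurable (N \<Otimes>\<^sub>M lborel)"
proof -
  have "(\<lambda>x. beta_of E (snd x)) \<in> borel_measurable (N \<Otimes>\<^sub>M lborel)" by measurable
  note entry = borel_measurable_derivative_component[OF gam_meas deriv this]
  show ?thesis
    unfolding jac_psi_def det_def matrix_def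
    by (simp only: vec_lambda_beta vector_add_component vector_scaleR_component)
       (intro borel_measurable_sum borel_measurable_times borel_measurable_prod borel_measurable_add
         borel_measurable_const entry)
qed

section \<open>The randomized lasso\<close>

lemma cond_law_density_eq:
  assumes P: "P = density M \<rho>" and [measurable]: "\<rho> \<in> borel_measurable M" "A \<in> sets M"
    and X [measurable]: "X \<in> measurable M N" and [measurable]: "r \<in> borel_measurable N"
    and push: "\<And>Y. Y \<in> sets N \<Longrightarrow>
      (\<integral>\<^sup>+x. \<rho> x * indicator A x * indicator Y (X x) \<partial>M) = (\<integral>\<^sup>+y. r y * indicator Y y \<partial>N)"
  shows "cond_law P A N X = density N (\<lambda>y. r y / emeasure P A)"
  unfolding cond_law_def
proof (rule measure_eqI)
  fix Y assume "Y \<in> sets (distr (density P (\<lambda>x. indicator A x / emeasure P A)) N X)"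
  then have Y [measurable]: "Y \<in> sets N" by simp
  have "emeasure (distr (density P (\<lambda>x. indicator A x / emeasure P A)) N X) Y
      = (\<integral>\<^sup>+x. \<rho> x * (indicator A x / emeasure P A * indicator (X -` Y \<inter> space M) x) \<partial>M)"
    using X by (simp add: P emeasure_distr emeasure_density nn_integral_density)
  also have "\<dots> = (\<integral>\<^sup>+x. \<rho> x * indicator A x * indicator Y (X x) / emeasure P A \<partial>M)"
    by (intro nn_integral_cong) (auto simp: indicator_def ennreal_times_divide)
  also have "\<dots> = (\<integral>\<^sup>+y. r y * indicator Y y \<partial>N) / emeasure P A"
    by (simp add: nn_integral_divide push)
  also have "\<dots> = emeasure (density N (\<lambda>y. r y / emeasure P A)) Y"
    by (simp add: emeasure_density nn_integral_divide[symmetric] ennreal_times_divide mult.commute)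
  finally show "emeasure (distr (density P (\<lambda>x. indicator A x / emeasure P A)) N X) Y
      = emeasure (density N (\<lambda>y. r y / emeasure P A)) Y" .
qed simp

lemma null_sets_coordinate_hyperplanes:
  "{u :: real^'p::finite. \<exists>i\<in>E. u $ i = 0} \<in> null_sets lborel"
proof -
  have "{u :: real^'p. \<exists>i\<in>E. u $ i = 0} \<in> sets lborel" by measurable
  with negligible_coordinate_hyperplanes[of E] show ?thesis
    by (simp add: negligible_iff_null_sets null_sets_completion_iff)
qed

locale lasso_model =
  fixes ell :: "'a \<Rightarrow> real^'p::finite \<Rightarrow> real" and gam :: "'a \<Rightarrow> real^'p \<Rightarrow> real^'p"
    and H :: "'a \<Rightarrow> real^'p \<Rightarrow> real^'p \<Rightarrow> real^'p" and lam :: real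
  assumes lam_pos: "lam > 0"
    and ell_convex: "\<And>s. convex_on UNIV (ell s)"
    and ell_grad: "\<And>s b. (ell s has_derivative (\<lambda>h. gam s b \<bullet> h)) (at b)"
    and gam_deriv: "\<And>s b. (gam s has_derivative H s b) (at b)"
    and unique_min: "\<And>s w. \<exists>!b. is_minimizer ell lam s w b"
begin

lemma beta_hat_omega_of:
  assumes "u \<in> Bset_coords E"
  shows "beta_hat ell lam s (omega_of gam lam E s u) = beta_of E u"
  unfolding beta_hat_def omega_of_def
  using is_minimizer_if_subgradient[where ell=ell and s=s and g="gam s (beta_of E u)",
      OF ell_convex ell_grad _ z_of_subgradient[OF assms]] lam_pos
  by (intro the1_equality[OF unique_min]) auto

lemma z_hat_omega_of:
  assumes "u \<in> Bset_coords E"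
  shows "z_hat ell gam lam s (omega_of gam lam E s u) = z_of E u"
  using lam_pos by (simp add: z_hat_def beta_hat_omega_of[OF assms]) (simp add: omega_of_def)

lemma omega_of_free_coords_hat:
  assumes "(beta_hat ell lam s w, z_hat ell gam lam s w) \<in> Bset E"
  shows "omega_of gam lam E s (free_coords E (beta_hat ell lam s w) (z_hat ell gam lam s w)) = w"
  using Bset_free_coords[OF assms] lam_pos by (simp add: omega_of_def z_hat_def)

lemma inj_on_omega_of: "inj_on (omega_of gam lam E s) (Bset_coords E)"
proof (rule inj_onI)
  fix u v assume "u \<in> Bset_coords E" "v \<in> Bset_coords E" "omega_of gam lam E s u = omega_of gam lam E s v"
  then show "u = v"
    by (metis beta_hat_omega_of z_hat_omega_of free_coords_beta_of_z_of)
qed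

lemma jac_psi_nonneg: "0 \<le> jac_psi H lam E s b"
  unfolding jac_psi_beta_of
  by (rule det_psd_plus_complement_nonneg[OF has_derivative_linear[OF gam_deriv]
        convex_on_hessian_psd[OF ell_convex ell_grad gam_deriv] lam_pos])

lemma continuous_on_gam: "continuous_on UNIV (gam s)"
  by (rule has_derivative_continuous_on) (use gam_deriv has_derivative_at_withinI in blast)

lemma event_fiber_negligible_outside:
  "negligible {w. (beta_hat ell lam s w, z_hat ell gam lam s w) \<in> Bset E \<and>
      w \<notin> omega_of gam lam E s ` {u \<in> Bset_coords E. \<forall>i\<in>E. u $ i \<noteq> 0}}"
proof (rule negligible_subset[OF negligible_omega_of_image_hyperplanes[OF gam_deriv]], safe)
  fix w assume event: "(beta_hat ell lam s w, z_hat ell gam lam s w) \<in> Bset E"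
    and not_regular: "w \<notin> omega_of gam lam E s ` {u \<in> Bset_coords E. \<forall>i\<in>E. u $ i \<noteq> 0}"
  define u where "u = free_coords E (beta_hat ell lam s w) (z_hat ell gam lam s w)"
  have u: "u \<in> Bset_coords E" "omega_of gam lam E s u = w"
    using omega_of_free_coords_hat[OF event] Bset_free_coords(1)[OF event] by (simp_all add: u_def)
  with not_regular have "\<exists>i\<in>E. u $ i = 0" by blast
  with u(2) show "w \<in> omega_of gam lam E s ` {u. \<exists>i\<in>E. u $ i = 0}" by blast
qed

lemma nn_integral_omega_of:
  fixes h :: "real^'p \<Rightarrow> real"
  assumes h_meas [measurable]: "h \<in> borel_measurable borel" and h_nonneg: "\<And>w. h w \<ge> 0"
    and h_finite: "(\<integral>\<^sup>+w. ennreal (h w) \<partial>lborel) < \<infinity>"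
    and h_event: "\<And>w. h w \<noteq> 0 \<Longrightarrow> (beta_hat ell lam s w, z_hat ell gam lam s w) \<in> Bset E"
    and jac_meas [measurable]: "(\<lambda>u. jac_psi H lam E s (beta_of E u)) \<in> borel_measurable borel"
  shows "(\<integral>\<^sup>+w. ennreal (h w) \<partial>lborel)
       = (\<integral>\<^sup>+u. ennreal (jac_psi H lam E s (beta_of E u) * h (omega_of gam lam E s u))
            * indicator (Bset_coords E) u \<partial>lborel)"
proof -
  define S where "S = {u \<in> Bset_coords E. \<forall>i\<in>E. u $ i \<noteq> 0}"
  define D where "D u v = H s (beta_of E u) (beta_of E v) + lam *\<^sub>R beta_of (- E) v" for u v
  have "S = Bset_coords E \<inter> (\<Inter>i\<in>E. {u. u $ i \<noteq> 0})" by (auto simp: S_def)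
  then have "open S" by (auto intro!: open_Int open_Bset_coords open_INT open_Collect_neq continuous_intros)
  have [measurable]: "S \<in> sets borel" "gam s \<in> borel_measurable borel"
    using \<open>open S\<close> continuous_on_gam by (auto intro: borel_measurable_continuous_onI)
  have "{w. h w \<noteq> 0 \<and> w \<notin> omega_of gam lam E s ` S} \<subseteq> {w. (beta_hat ell lam s w, z_hat ell gam lam s w) \<in> Bset E \<and>
      w \<notin> omega_of gam lam E s ` {u \<in> Bset_coords E. \<forall>i\<in>E. u $ i \<noteq> 0}}"
    using h_event by (auto simp: S_def)
  then have outside: "negligible {w. h w \<noteq> 0 \<and> w \<notin> omega_of gam lam E s ` S}"
    using event_fiber_negligible_outside negligible_subset by blast
  have "(\<integral>\<^sup>+w. ennreal (h w) \<partial>lborel)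
      = (\<integral>\<^sup>+u. ennreal (\<bar>det (matrix (D u))\<bar> * h (omega_of gam lam E s u)) * indicator S u \<partial>lborel)"
  proof (rule nn_integral_change_of_variables[OF \<open>open S\<close> _ _ h_meas h_nonneg outside h_finite])
    show "(omega_of gam lam E s has_derivative D u) (at u)" if "u \<in> S" for u
      using omega_of_has_derivative[where gam=gam and s=s and H=H, OF gam_deriv] that
      by (simp add: S_def D_def[abs_def])
    show "inj_on (omega_of gam lam E s) S"
      unfolding S_def by (rule inj_on_subset[OF inj_on_omega_of]) auto
    show "(\<lambda>u. ennreal (\<bar>det (matrix (D u))\<bar> * h (omega_of gam lam E s u)) * indicator S u)
        \<in> borel_measurable borel"
      unfolding D_def[abs_def] jac_psi_beta_of[symmetric] omega_of_def by measurable
  qed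
  also have "\<dots> = (\<integral>\<^sup>+u. ennreal (jac_psi H lam E s (beta_of E u) * h (omega_of gam lam E s u))
            * indicator (Bset_coords E) u \<partial>lborel)"
    using AE_not_in[OF null_sets_coordinate_hyperplanes[of E]]
    by (intro nn_integral_cong_AE, eventually_elim)
       (auto simp: S_def indicator_def D_def[abs_def] jac_psi_beta_of[symmetric] jac_psi_nonneg)
  finally show ?thesis .
qed

lemma nn_integral_event_fiber:
  fixes g :: "real^'p \<Rightarrow> real" and T :: "(real^'p) set"
  assumes g_meas [measurable]: "g \<in> borel_measurable borel" and g_nonneg: "\<And>w. g w \<ge> 0"
    and g_finite: "(\<integral>\<^sup>+w. ennreal (g w) \<partial>lborel) < \<infinity>"
    and bhat_meas [measurable]: "beta_hat ell lam s \<in> borel_measurable borel"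
    and jac_meas: "(\<lambda>u. jac_psi H lam E s (beta_of E u)) \<in> borel_measurable borel"
    and T [measurable]: "T \<in> sets borel"
  shows "(\<integral>\<^sup>+w. ennreal (g w * indicator (Bset E) (beta_hat ell lam s w, z_hat ell gam lam s w)
            * indicator T (free_coords E (beta_hat ell lam s w) (z_hat ell gam lam s w))) \<partial>lborel)
       = (\<integral>\<^sup>+u. ennreal (g (omega_of gam lam E s u) * jac_psi H lam E s (beta_of E u)
            * indicator (Bset_coords E) u * indicator T u) \<partial>lborel)"
proof -
  define h where "h w = g w * indicator (Bset E) (beta_hat ell lam s w, z_hat ell gam lam s w)
            * indicator T (free_coords E (beta_hat ell lam s w) (z_hat ell gam lam s w))" for w
  have h_omega_of: "h (omega_of gam lam E s u) = g (omega_of gam lam E s u) * indicator T u"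
    if "u \<in> Bset_coords E" for u
    using that by (simp add: h_def beta_hat_omega_of z_hat_omega_of Bset_iff_Bset_coords
        free_coords_beta_of_z_of)
  have [measurable]: "gam s \<in> borel_measurable borel"
    using continuous_on_gam by (rule borel_measurable_continuous_onI)
  have "(\<integral>\<^sup>+w. ennreal (h w) \<partial>lborel) \<le> (\<integral>\<^sup>+w. ennreal (g w) \<partial>lborel)"
    by (intro nn_integral_mono) (auto simp: h_def indicator_def g_nonneg)
  then have "(\<integral>\<^sup>+w. ennreal (h w) \<partial>lborel)
      = (\<integral>\<^sup>+u. ennreal (jac_psi H lam E s (beta_of E u) * h (omega_of gam lam E s u))
            * indicator (Bset_coords E) u \<partial>lborel)"
    using g_finite jac_meas unfolding h_def[abs_def] z_hat_def
    by (intro nn_integral_omega_of) (auto simp: g_nonneg indicator_def z_hat_def)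
  also have "\<dots> = (\<integral>\<^sup>+u. ennreal (g (omega_of gam lam E s u) * jac_psi H lam E s (beta_of E u)
            * indicator (Bset_coords E) u * indicator T u) \<partial>lborel)"
    by (intro nn_integral_cong) (auto simp: h_omega_of indicator_def mult.commute)
  finally show ?thesis by (simp add: h_def)
qed

lemma nn_integral_event_pair:
  fixes N :: "'a measure" and f :: "'a \<Rightarrow> real" and g :: "real^'p \<Rightarrow> real"
  assumes gam_meas: "(\<lambda>(s, b). gam s b) \<in> borel_measurable (N \<Otimes>\<^sub>M lborel)"
    and bhat_meas: "(\<lambda>(s, w). beta_hat ell lam s w) \<in> borel_measurable (N \<Otimes>\<^sub>M lborel)"
    and f_meas [measurable]: "f \<in> borel_measurable N" and f_nonneg: "\<And>s. f s \<ge> 0"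
    and g_meas [measurable]: "g \<in> borel_measurable borel" and g_nonneg: "\<And>w. g w \<ge> 0"
    and g_finite: "(\<integral>\<^sup>+w. ennreal (g w) \<partial>lborel) < \<infinity>"
    and Y [measurable]: "Y \<in> sets (N \<Otimes>\<^sub>M lborel)"
  shows "(\<integral>\<^sup>+x. ennreal (f (fst x) * g (snd x))
            * indicator (Bset E) (beta_hat ell lam (fst x) (snd x), z_hat ell gam lam (fst x) (snd x))
            * indicator Y (fst x, free_coords E (beta_hat ell lam (fst x) (snd x))
                                                (z_hat ell gam lam (fst x) (snd x))) \<partial>(N \<Otimes>\<^sub>M lborel))
       = (\<integral>\<^sup>+x. ennreal (f (fst x) * g (omega_of gam lam E (fst x) (snd x))
            * jac_psi H lam E (fst x) (beta_of E (snd x)) * indicator (Bset_coords E) (snd x))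
            * indicator Y x \<partial>(N \<Otimes>\<^sub>M lborel))"
    (is "integral\<^sup>N _ ?L = integral\<^sup>N _ ?R")
proof -
  note [measurable] = borel_measurable_beta_hat_z_hat[OF gam_meas bhat_meas]
  have [measurable]: "(\<lambda>x. omega_of gam lam E (fst x) (snd x)) \<in> borel_measurable (N \<Otimes>\<^sub>M lborel)"
    using borel_measurable_comp_pair[OF gam_meas, of "\<lambda>x. beta_of E (snd x)"]
    unfolding omega_of_def by measurable
  have jac [measurable]: "(\<lambda>x. jac_psi H lam E (fst x) (beta_of E (snd x))) \<in> borel_measurable (N \<Otimes>\<^sub>M lborel)"
    by (rule borel_measurable_jac_psi[OF gam_meas gam_deriv])
  have fiber: "(\<integral>\<^sup>+w. ?L (s, w) \<partial>lborel) = (\<integral>\<^sup>+u. ?R (s, u) \<partial>lborel)" if s: "s \<in> space N" for s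
  proof -
    have [measurable]: "{u. (s, u) \<in> Y} \<in> sets borel"
      using sets_Pair1[OF Y, of s] by (simp add: vimage_def)
    have [measurable]: "beta_hat ell lam s \<in> borel_measurable borel"
      using measurable_Pair2[OF borel_measurable_beta_hat_z_hat(1)[OF gam_meas bhat_meas] s] by simp
    have [measurable]: "gam s \<in> borel_measurable borel"
      using continuous_on_gam by (rule borel_measurable_continuous_onI)
    have [measurable]: "(\<lambda>u. jac_psi H lam E s (beta_of E u)) \<in> borel_measurable borel"
      using measurable_Pair2[OF jac s] by simp
    have [measurable]: "(\<lambda>u. indicator Y (s, u) :: ennreal) \<in> borel_measurable borel"
      using measurable_Pair2[OF borel_measurable_indicator[OF Y] s] by simp
    have "(\<integral>\<^sup>+w. ?L (s, w) \<partial>lborel)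
        = ennreal (f s) * (\<integral>\<^sup>+w. ennreal (g w * indicator (Bset E) (beta_hat ell lam s w, z_hat ell gam lam s w)
            * indicator {u. (s, u) \<in> Y} (free_coords E (beta_hat ell lam s w) (z_hat ell gam lam s w))) \<partial>lborel)"
      unfolding z_hat_def
      by (subst nn_integral_cmult[symmetric], measurable)
         (auto intro!: nn_integral_cong simp: f_nonneg g_nonneg ennreal_mult'[symmetric] indicator_def)
    also have "\<dots> = ennreal (f s) * (\<integral>\<^sup>+u. ennreal (g (omega_of gam lam E s u) * jac_psi H lam E s (beta_of E u)
            * indicator (Bset_coords E) u * indicator {u. (s, u) \<in> Y} u) \<partial>lborel)"
      using g_nonneg g_finite by (subst nn_integral_event_fiber) auto
    also have "\<dots> = (\<integral>\<^sup>+u. ?R (s, u) \<partial>lborel)"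
      unfolding omega_of_def
      by (subst nn_integral_cmult[symmetric], measurable)
         (auto intro!: nn_integral_cong simp: f_nonneg g_nonneg jac_psi_nonneg ennreal_mult'[symmetric] indicator_def)
    finally show ?thesis .
  qed
  have "integral\<^sup>N (N \<Otimes>\<^sub>M lborel) ?L = (\<integral>\<^sup>+s. \<integral>\<^sup>+w. ?L (s, w) \<partial>lborel \<partial>N)"
    by (rule lborel.nn_integral_fst[symmetric]) measurable
  also have "\<dots> = (\<integral>\<^sup>+s. \<integral>\<^sup>+u. ?R (s, u) \<partial>lborel \<partial>N)"
    by (intro nn_integral_cong fiber)
  also have "\<dots> = integral\<^sup>N (N \<Otimes>\<^sub>M lborel) ?R"
    by (rule lborel.nn_integral_fst) measurable
  finally show ?thesis .
qed

lemma cond_law_event: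
  fixes N :: "'a measure" and f :: "'a \<Rightarrow> real" and g :: "real^'p \<Rightarrow> real" and E :: "'p set"
  assumes gam_meas: "(\<lambda>(s, b). gam s b) \<in> borel_measurable (N \<Otimes>\<^sub>M lborel)"
    and bhat_meas: "(\<lambda>(s, w). beta_hat ell lam s w) \<in> borel_measurable (N \<Otimes>\<^sub>M lborel)"
    and f_meas [measurable]: "f \<in> borel_measurable N" and f_nonneg: "\<And>s. f s \<ge> 0"
    and g_meas [measurable]: "g \<in> borel_measurable borel" and g_nonneg: "\<And>w. g w \<ge> 0"
    and g_finite: "(\<integral>\<^sup>+w. ennreal (g w) \<partial>lborel) < \<infinity>"
  defines "P \<equiv> density (N \<Otimes>\<^sub>M lborel) (\<lambda>(s, w). ennreal (f s) * ennreal (g w))"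
    and "A \<equiv> {(s, w) \<in> space (N \<Otimes>\<^sub>M lborel). (beta_hat ell lam s w, z_hat ell gam lam s w) \<in> Bset E}"
  shows "cond_law P A (N \<Otimes>\<^sub>M lborel)
           (\<lambda>(s, w). (s, free_coords E (beta_hat ell lam s w) (z_hat ell gam lam s w)))
       = density (N \<Otimes>\<^sub>M lborel) (\<lambda>x. ennreal (f (fst x) * g (omega_of gam lam E (fst x) (snd x))
           * jac_psi H lam E (fst x) (beta_of E (snd x)) * indicator (Bset_coords E) (snd x))
           / emeasure P A)"
proof (rule cond_law_density_eq[OF P_def[THEN meta_eq_to_obj_eq]])
  note [measurable] = borel_measurable_beta_hat_z_hat[OF gam_meas bhat_meas]
  have "A = {x \<in> space (N \<Otimes>\<^sub>M lborel).
      (beta_hat ell lam (fst x) (snd x), z_hat ell gam lam (fst x) (snd x)) \<in> Bset E}"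
    unfolding A_def by auto
  then show "A \<in> sets (N \<Otimes>\<^sub>M lborel)" by (simp only:) measurable
  show "(\<lambda>(s, w). (s, free_coords E (beta_hat ell lam s w) (z_hat ell gam lam s w)))
      \<in> measurable (N \<Otimes>\<^sub>M lborel) (N \<Otimes>\<^sub>M lborel)"
    unfolding split_beta' by measurable
  show "(\<lambda>x. ennreal (f (fst x) * g (omega_of gam lam E (fst x) (snd x))
      * jac_psi H lam E (fst x) (beta_of E (snd x)) * indicator (Bset_coords E) (snd x)))
      \<in> borel_measurable (N \<Otimes>\<^sub>M lborel)"
    using borel_measurable_jac_psi[OF gam_meas gam_deriv, of lam E]
      borel_measurable_comp_pair[OF gam_meas, of "\<lambda>x. beta_of E (snd x)"]
    unfolding omega_of_def by measurable
  fix Y :: "('a \<times> (real^'p)) set" assume Y: "Y \<in> sets (N \<Otimes>\<^sub>M lborel)"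
  show "(\<integral>\<^sup>+x. (\<lambda>(s, w). ennreal (f s) * ennreal (g w)) x * indicator A x
          * indicator Y ((\<lambda>(s, w). (s, free_coords E (beta_hat ell lam s w) (z_hat ell gam lam s w))) x)
        \<partial>(N \<Otimes>\<^sub>M lborel))
      = (\<integral>\<^sup>+x. ennreal (f (fst x) * g (omega_of gam lam E (fst x) (snd x))
          * jac_psi H lam E (fst x) (beta_of E (snd x)) * indicator (Bset_coords E) (snd x))
          * indicator Y x \<partial>(N \<Otimes>\<^sub>M lborel))"
    unfolding nn_integral_event_pair[OF gam_meas bhat_meas f_meas f_nonneg g_meas g_nonneg g_finite Y, symmetric]
    by (intro nn_integral_cong) (auto simp: A_def indicator_def ennreal_mult f_nonneg g_nonneg)
qed (simp add: P_def)

end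

theorem theorem2:
  fixes mu :: "'a measure"
    and f :: "'a \<Rightarrow> real"
    and g :: "real^'p \<Rightarrow> real"
    and lam :: real
    and ell :: "'a \<Rightarrow> real^'p \<Rightarrow> real"
    and gam :: "'a \<Rightarrow> real^'p \<Rightarrow> real^'p"
    and H :: "'a \<Rightarrow> real^'p \<Rightarrow> real^'p \<Rightarrow> real^'p"
    and E :: "'p set"
  assumes mu_sf: "sigma_finite_measure mu"
    and f_meas: "f \<in> borel_measurable mu" and f_nonneg: "\<And>s. f s \<ge> 0"
    and F_prob: "prob_space (density mu f)"
    and g_meas: "g \<in> borel_measurable lborel" and g_nonneg: "\<And>w. g w \<ge> 0"
    and G_prob: "prob_space (density lborel g)"
    and lam_pos: "lam > 0"
    and ell_convex: "\<And>s. convex_on UNIV (ell s)"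
    and ell_grad: "\<And>s b. (ell s has_derivative (\<lambda>h. gam s b \<bullet> h)) (at b)"
    and gam_deriv: "\<And>s b. (gam s has_derivative H s b) (at b)"
    and H_cont: "\<And>s. continuous_on UNIV (\<lambda>b. matrix (H s b))"
    and gam_meas: "(\<lambda>(s, b). gam s b) \<in> borel_measurable (mu \<Otimes>\<^sub>M lborel)"
    and unique_min: "\<And>s w. \<exists>!b. is_minimizer ell lam s w b"
    and bhat_meas: "(\<lambda>(s, w). beta_hat ell lam s w) \<in> borel_measurable (mu \<Otimes>\<^sub>M lborel)"
    and event_pos: "emeasure (density mu f \<Otimes>\<^sub>M density lborel g)
         {(s, w) \<in> space (mu \<Otimes>\<^sub>M lborel).
            (beta_hat ell lam s w, z_hat ell gam lam s w) \<in> Bset E} > 0"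
  shows "\<exists>c>0. cond_law (density mu f \<Otimes>\<^sub>M density lborel g)
           {(s, w) \<in> space (mu \<Otimes>\<^sub>M lborel).
              (beta_hat ell lam s w, z_hat ell gam lam s w) \<in> Bset E}
           (mu \<Otimes>\<^sub>M lborel)
           (\<lambda>(s, w). (s, free_coords E (beta_hat ell lam s w) (z_hat ell gam lam s w)))
         = density (mu \<Otimes>\<^sub>M lborel)
             (\<lambda>(s, u). ennreal (c * f s * g (gam s (beta_of E u) + lam *\<^sub>R z_of E u)
                         * jac_psi H lam E s (beta_of E u)
                         * indicator (Bset E) (beta_of E u, z_of E u)))"
proof -
  interpret lasso_model ell gam H lam
    by unfold_locales (fact lam_pos ell_convex ell_grad gam_deriv unique_min)+
  let ?M = "mu \<Otimes>\<^sub>M (lborel :: (real^'p) measure)" and ?P = "density mu f \<Otimes>\<^sub>M density lborel g"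
  let ?A = "{(s, w) \<in> space ?M. (beta_hat ell lam s w, z_hat ell gam lam s w) \<in> Bset E}"
    and ?X = "\<lambda>(s, w). (s, free_coords E (beta_hat ell lam s w) (z_hat ell gam lam s w))"
  have g_borel: "g \<in> borel_measurable borel" using g_meas by simp
  have P_density: "?P = density ?M (\<lambda>(s, w). ennreal (f s) * ennreal (g w))"
    using prob_space_imp_sigma_finite[OF G_prob] f_meas g_borel
    by (intro pair_measure_density) (auto intro: lborel.sigma_finite_measure_axioms)
  have "(\<integral>\<^sup>+w. ennreal (g w) \<partial>lborel) = 1"
    using prob_space.emeasure_space_1[OF G_prob] g_meas by (simp add: emeasure_density)
  then have g_finite: "(\<integral>\<^sup>+w. ennreal (g w) \<partial>lborel) < \<infinity>" by simp
  interpret P: prob_space ?P by (rule prob_space_pair[OF F_prob G_prob])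
  define c where "c = 1 / measure ?P ?A"
  have "emeasure ?P ?A = ennreal (1 / c)" "c > 0"
    using P.emeasure_eq_measure[of ?A] event_pos by (simp_all add: c_def)
  then have normalize:
    "(\<lambda>x. ennreal (f (fst x) * g (omega_of gam lam E (fst x) (snd x))
        * jac_psi H lam E (fst x) (beta_of E (snd x)) * indicator (Bset_coords E) (snd x)) / emeasure ?P ?A)
      = (\<lambda>(s, u). ennreal (c * f s * g (gam s (beta_of E u) + lam *\<^sub>R z_of E u)
        * jac_psi H lam E s (beta_of E u) * indicator (Bset E) (beta_of E u, z_of E u)))"
    by (auto simp: fun_eq_iff divide_ennreal f_nonneg g_nonneg jac_psi_nonneg omega_of_def
        Bset_iff_Bset_coords indicator_def)
  have "cond_law ?P ?A ?M ?X
      = density ?M (\<lambda>x. ennreal (f (fst x) * g (omega_of gam lam E (fst x) (snd x))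
          * jac_psi H lam E (fst x) (beta_of E (snd x)) * indicator (Bset_coords E) (snd x)) / emeasure ?P ?A)"
    unfolding P_density
    by (rule cond_law_event[OF gam_meas bhat_meas f_meas f_nonneg g_borel g_nonneg g_finite])
  with \<open>c > 0\<close> show ?thesis unfolding normalize by blast
qed

end
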